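(* Let $S_u\subseteq[p]$, $S_v\subseteq[q]$ with $|S_u|=s_u$, $|S_v|=s_v$, let $B^\star\in\mathbb R^{p\times q}$ have all nonzero entries in $S_u\times S_v$, assume $n>s_us_v$, $\lambda>0$, and $\sigma_{\min}((\widehat\Sigma_X)_{S_uS_u})>0$, $\sigma_{\min}((\widehat\Sigma_Y)_{S_vS_v})>0$. Let $\tilde B\in\mathbb R^{s_u\times s_v}$ be a minimizer of $$\tfrac12\Big\|\tfrac1nX_{S_u}BY_{S_v}^\top-I_n\Big\|_F^2+\lambda\sum_{i,j}|B_{ij}|$$ and $\tilde\Delta=\tilde B-B^\star_{S_uS_v}$. Then $$\|\tilde\Delta\|_F\le\frac{2\big(\|\widehat\Sigma_{XY}-\widehat\Sigma_XB^\star\widehat\Sigma_Y\|_\infty+\lambda\big)}{\sigma_{\min}((\widehat\Sigma_X)_{S_uS_u})\,\sigma_{\min}((\widehat\Sigma_Y)_{S_vS_v})}\sqrt{s_us_v}.$$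
   Context: $X\in\mathbb R^{n\times p}$, $Y\in\mathbb R^{n\times q}$ are data matrices; $X_{S_u}$ (resp. $Y_{S_v}$) is the submatrix of columns indexed by $S_u$ (resp. $S_v$). $\widehat\Sigma_X=X^\top X/n$, $\widehat\Sigma_Y=Y^\top Y/n$, $\widehat\Sigma_{XY}=X^\top Y/n$. $A_{S_1S_2}$ is the submatrix with rows in $S_1$ and columns in $S_2$; $\|A\|_\infty=\max_{ij}|A_{ij}|$; $\sigma_{\min}$ is the smallest singular value. *)

theory Defs
  imports "Jordan_Normal_Form.DL_Rank_Submatrix" "Jordan_Normal_Form.Char_Poly"
begin

text \<open>Matrices are Jordan_Normal_Form matrices (real mat), indices 0-based.
  Column selection X_S is submatrix X {..<dim_row X} S.\<close>

definition frob_norm :: "real mat \<Rightarrow> real" where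
  "frob_norm A = sqrt (\<Sum>i<dim_row A. \<Sum>j<dim_col A. (A $$ (i,j))\<^sup>2)"

definition max_abs_norm :: "real mat \<Rightarrow> real" where
  "max_abs_norm A = Max ({0} \<union> {\<bar>A $$ (i,j)\<bar> | i j. i < dim_row A \<and> j < dim_col A})"

definition l1_entry_norm :: "real mat \<Rightarrow> real" where
  "l1_entry_norm A = (\<Sum>i<dim_row A. \<Sum>j<dim_col A. \<bar>A $$ (i,j)\<bar>)"

text \<open>Smallest singular value: square root of the smallest eigenvalue of A^T A
  (A has at least as many rows as columns in all uses below; they are square).\<close>
definition sigma_min :: "real mat \<Rightarrow> real" where
  "sigma_min A = sqrt (Min {e. eigenvalue (transpose_mat A * A) e})"

definition cols :: "real mat \<Rightarrow> nat set \<Rightarrow> real mat" where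
  "cols X S = submatrix X {..<dim_row X} S"

definition sample_cov :: "real mat \<Rightarrow> real mat \<Rightarrow> real mat" where
  "sample_cov X Y = (1 / real (dim_row X)) \<cdot>\<^sub>m (transpose_mat X * Y)"

definition cca_objective :: "real mat \<Rightarrow> real mat \<Rightarrow> real \<Rightarrow> real mat \<Rightarrow> real" where
  "cca_objective XS YS lam B =
     (1/2) * (frob_norm ((1 / real (dim_row XS)) \<cdot>\<^sub>m (XS * B * transpose_mat YS)
                          - 1\<^sub>m (dim_row XS)))\<^sup>2 + lam * l1_entry_norm B"

end

theory Submission
  imports Defs
begin

text \<open>Let D = B~ - B*(S_u, S_v). Comparing the objective at its minimizer B~ with its value
  at B*(S_u, S_v) gives the basic inequality |X_S D Y_S^T|_F^2 / (2 n^2) <= (g + lambda) |D|_1,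
  where g bounds the gradient of the quadratic part at the truth; as B* is supported on
  S_u x S_v, that gradient is the S_u x S_v block of Sigma_X B* Sigma_Y - Sigma_XY.
  The left side is at least sigma_X sigma_Y |D|_F^2 / 2, because each Gram block
  (Sigma_X)(S_u, S_u) dominates its smallest singular value times the identity, and
  |D|_1 <= sqrt (s_u s_v) |D|_F by Cauchy-Schwarz. Dividing by |D|_F gives the bound.\<close>

lemma quadratic_nonneg_imp_discriminant_le:
  fixes a b c :: real
  assumes nonneg: "\<And>t. 0 \<le> a + 2*b*t + c*t^2" and "c \<ge> 0"
  shows "b^2 \<le> a*c"
proof (cases "c = 0")
  case True
  show ?thesis
  proof (cases "b = 0")
    case False
    have "0 \<le> a + 2*b*(-(\<bar>a\<bar>+1)/(2*b)) + c*(-(\<bar>a\<bar>+1)/(2*b))^2" by (rule nonneg)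
    also have "\<dots> = a - (\<bar>a\<bar>+1)" using False True by (simp add: field_simps)
    finally show ?thesis by simp
  qed (use True in simp)
next
  case False
  hence c: "c > 0" using assms(2) by simp
  have "0 \<le> a + 2*b*(-b/c) + c*(-b/c)^2" by (rule nonneg)
  also have "\<dots> = a - b^2/c" using c by (simp add: field_simps power2_eq_square)
  finally show ?thesis using c by (simp add: field_simps mult.commute)
qed

lemma sum_Cauchy_Schwarz:
  fixes f g :: "'a \<Rightarrow> real"
  shows "(\<Sum>s\<in>S. f s * g s)^2 \<le> (\<Sum>s\<in>S. (f s)^2) * (\<Sum>s\<in>S. (g s)^2)"
proof (rule quadratic_nonneg_imp_discriminant_le)
  fix t
  have "0 \<le> (\<Sum>s\<in>S. (f s + t * g s)^2)" by (intro sum_nonneg) auto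
  also have "\<dots> = (\<Sum>s\<in>S. (f s)^2) + 2 * (\<Sum>s\<in>S. f s * g s) * t + (\<Sum>s\<in>S. (g s)^2) * t^2"
    by (simp add: power2_eq_square algebra_simps sum.distrib sum_distrib_left sum_distrib_right)
  finally show "0 \<le> (\<Sum>s\<in>S. (f s)^2) + 2 * (\<Sum>s\<in>S. f s * g s) * t + (\<Sum>s\<in>S. (g s)^2) * t^2" .
qed (intro sum_nonneg, auto)

section \<open>Quadratic forms in coordinates\<close>

text \<open>Vectors are functions on nat of which only the values below the dimension k matter.\<close>

definition dotp :: "nat \<Rightarrow> (nat \<Rightarrow> real) \<Rightarrow> (nat \<Rightarrow> real) \<Rightarrow> real" where
  "dotp k x y = (\<Sum>i<k. x i * y i)"

definition mat_app :: "real mat \<Rightarrow> nat \<Rightarrow> (nat \<Rightarrow> real) \<Rightarrow> nat \<Rightarrow> real" where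
  "mat_app A k x = (\<lambda>i. \<Sum>j<k. A $$ (i,j) * x j)"

definition bilin :: "real mat \<Rightarrow> nat \<Rightarrow> (nat \<Rightarrow> real) \<Rightarrow> (nat \<Rightarrow> real) \<Rightarrow> real" where
  "bilin A k x y = dotp k x (mat_app A k y)"

definition entry_sq_sum :: "real mat \<Rightarrow> nat \<Rightarrow> real" where
  "entry_sq_sum A k = (\<Sum>i<k. \<Sum>j<k. (A $$ (i,j))^2)"

definition symmetric_block :: "nat \<Rightarrow> real mat \<Rightarrow> bool" where
  "symmetric_block k A \<longleftrightarrow> (\<forall>i<k. \<forall>j<k. A $$ (i,j) = A $$ (j,i))"

definition psd_block :: "nat \<Rightarrow> real mat \<Rightarrow> bool" where
  "psd_block k A \<longleftrightarrow> (\<forall>z. 0 \<le> bilin A k z z)"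

lemma dotp_self_nonneg: "0 \<le> dotp k x x"
  unfolding dotp_def by (intro sum_nonneg) auto

lemma dotp_self_eq_0: "dotp k x x = 0 \<Longrightarrow> i < k \<Longrightarrow> x i = 0"
  unfolding dotp_def using sum_nonneg_eq_0_iff[of "{..<k}" "\<lambda>i. x i * x i"] by auto

lemma dotp_cong:
  "(\<And>i. i < k \<Longrightarrow> x i = x' i) \<Longrightarrow> (\<And>i. i < k \<Longrightarrow> y i = y' i) \<Longrightarrow> dotp k x y = dotp k x' y'"
  unfolding dotp_def by (intro sum.cong) auto

lemma dotp_add_left: "dotp k (\<lambda>i. y i + z i) x = dotp k y x + dotp k z x"
  and dotp_add_right: "dotp k x (\<lambda>i. y i + z i) = dotp k x y + dotp k x z"
  and dotp_scale_left: "dotp k (\<lambda>i. t * y i) x = t * dotp k y x"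
  and dotp_scale_right: "dotp k x (\<lambda>i. t * y i) = t * dotp k x y"
  unfolding dotp_def by (simp_all add: algebra_simps sum.distrib sum_distrib_left)

lemma mat_app_add: "mat_app A k (\<lambda>i. y i + z i) = (\<lambda>i. mat_app A k y i + mat_app A k z i)"
  and mat_app_scale: "mat_app A k (\<lambda>i. t * y i) = (\<lambda>i. t * mat_app A k y i)"
  unfolding mat_app_def by (simp_all add: algebra_simps sum.distrib sum_distrib_left)

lemma mat_app_mult:
  assumes "C \<in> carrier_mat k k" "B \<in> carrier_mat k k" "i < k"
  shows "mat_app C k (mat_app B k x) i = mat_app (C * B) k x i"
proof -
  have "mat_app C k (mat_app B k x) i = (\<Sum>j<k. \<Sum>l<k. C $$ (i,j) * B $$ (j,l) * x l)"
    unfolding mat_app_def by (simp add: sum_distrib_left algebra_simps)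
  also have "\<dots> = (\<Sum>l<k. \<Sum>j<k. C $$ (i,j) * B $$ (j,l) * x l)" by (rule sum.swap)
  also have "\<dots> = mat_app (C * B) k x i"
    unfolding mat_app_def using assms
    by (intro sum.cong refl) (simp add: scalar_prod_def sum_distrib_right lessThan_atLeast0)
  finally show ?thesis .
qed

lemma mat_app_one: "i < k \<Longrightarrow> mat_app (1\<^sub>m k) k x i = x i"
  unfolding mat_app_def by (simp add: if_distrib[of "\<lambda>c. c * _"] cong: if_cong)

lemma bilin_commute:
  assumes "symmetric_block k A"
  shows "bilin A k x y = bilin A k y x"
proof -
  have "bilin A k x y = (\<Sum>i<k. \<Sum>j<k. x i * A $$ (i,j) * y j)"
    unfolding bilin_def dotp_def mat_app_def by (simp add: sum_distrib_left algebra_simps)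
  also have "\<dots> = (\<Sum>j<k. \<Sum>i<k. x i * A $$ (i,j) * y j)" by (rule sum.swap)
  also have "\<dots> = (\<Sum>j<k. \<Sum>i<k. y j * A $$ (j,i) * x i)"
    using assms unfolding symmetric_block_def by (intro sum.cong refl) (simp add: algebra_simps)
  also have "\<dots> = bilin A k y x"
    unfolding bilin_def dotp_def mat_app_def by (simp add: sum_distrib_left algebra_simps)
  finally show ?thesis .
qed

lemma psd_bilin_Cauchy_Schwarz:
  assumes "symmetric_block k A" and psd: "psd_block k A"
  shows "(bilin A k x y)^2 \<le> bilin A k x x * bilin A k y y"
proof (rule quadratic_nonneg_imp_discriminant_le)
  fix t
  have "0 \<le> bilin A k (\<lambda>i. x i + t * y i) (\<lambda>i. x i + t * y i)"
    using psd unfolding psd_block_def by blast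
  also have "\<dots> = bilin A k x x + 2 * bilin A k x y * t + bilin A k y y * t^2"
    unfolding bilin_def mat_app_add mat_app_scale dotp_add_left dotp_add_right
      dotp_scale_left dotp_scale_right
    using bilin_commute[OF assms(1), of y x] unfolding bilin_def
    by (simp add: algebra_simps power2_eq_square)
  finally show "0 \<le> bilin A k x x + 2 * bilin A k x y * t + bilin A k y y * t^2" .
qed (use psd in \<open>simp add: psd_block_def\<close>)

lemma dotp_Cauchy_Schwarz: "(dotp k x y)^2 \<le> dotp k x x * dotp k y y"
  unfolding dotp_def using sum_Cauchy_Schwarz[of x y "{..<k}"] by (simp add: power2_eq_square)

lemma dotp_mat_app_le: "dotp k (mat_app A k x) (mat_app A k x) \<le> entry_sq_sum A k * dotp k x x"
proof -
  have "dotp k (mat_app A k x) (mat_app A k x) = (\<Sum>i<k. (dotp k (\<lambda>j. A $$ (i,j)) x)^2)"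
    unfolding dotp_def mat_app_def by (simp add: power2_eq_square)
  also have "\<dots> \<le> (\<Sum>i<k. dotp k (\<lambda>j. A $$ (i,j)) (\<lambda>j. A $$ (i,j)) * dotp k x x)"
    by (intro sum_mono dotp_Cauchy_Schwarz)
  also have "\<dots> = entry_sq_sum A k * dotp k x x"
    unfolding entry_sq_sum_def dotp_def by (simp add: sum_distrib_right power2_eq_square)
  finally show ?thesis .
qed

section \<open>The smallest singular value of a Gram matrix\<close>

lemma entry_sq_sum_nonneg: "0 \<le> entry_sq_sum A k"
  unfolding entry_sq_sum_def by (intro sum_nonneg) auto

(* From C B = I we get |x|^2 <= |C|_F^2 |Bx|^2, while Cauchy-Schwarz for the semi-inner
   product of B gives |Bx|^4 <= (x'Bx) ((Bx)'B(Bx)) <= (x'Bx) |B|_F |Bx|^2. *)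
lemma invertible_psd_coercive:
  assumes B: "B \<in> carrier_mat k k" and C: "C \<in> carrier_mat k k" and CB: "C * B = 1\<^sub>m k"
    and sym: "symmetric_block k B" and psd: "psd_block k B"
    and unit: "dotp k x x = 1"
  shows "1 \<le> (entry_sq_sum C k)^2 * entry_sq_sum B k * (bilin B k x x)^2"
proof -
  define u where "u = mat_app B k x"
  define s where "s = dotp k u u"
  define q where "q = bilin B k x x"
  define r where "r = bilin B k u u"
  have q0: "q \<ge> 0" and r0: "r \<ge> 0" using psd unfolding q_def r_def psd_block_def by auto
  have "s = bilin B k u x" unfolding s_def bilin_def u_def ..
  hence "s^2 \<le> r * q" unfolding r_def q_def using psd_bilin_Cauchy_Schwarz[OF sym psd] by metis
  hence s4: "s^2 * s^2 \<le> (r*r) * (q*q)"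
    using q0 r0 mult_mono[of "s^2" "r*q" "s^2" "r*q"] by (simp add: algebra_simps)
  have "r^2 \<le> s * dotp k (mat_app B k u) (mat_app B k u)"
    unfolding r_def bilin_def s_def by (rule dotp_Cauchy_Schwarz)
  also have "\<dots> \<le> s * (entry_sq_sum B k * s)"
    unfolding s_def by (intro mult_left_mono dotp_mat_app_le dotp_self_nonneg)
  finally have r2: "r*r \<le> entry_sq_sum B k * (s*s)" by (simp add: power2_eq_square algebra_simps)
  have "dotp k x x = dotp k (mat_app C k u) (mat_app C k u)"
    unfolding u_def by (intro dotp_cong) (simp_all add: mat_app_mult[OF C B] CB mat_app_one)
  also have "\<dots> \<le> entry_sq_sum C k * s" unfolding s_def by (rule dotp_mat_app_le)
  finally have s1: "1 \<le> entry_sq_sum C k * s" using unit by simp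
  moreover have "s \<ge> 0" unfolding s_def by (rule dotp_self_nonneg)
  ultimately have "s > 0" by (cases "s = 0") auto
  moreover have "s^2 * s^2 \<le> (entry_sq_sum B k * (s*s)) * (q*q)"
    using s4 r2 by (meson order_trans mult_right_mono zero_le_square)
  ultimately have "s^2 \<le> entry_sq_sum B k * q^2" by (simp add: power2_eq_square algebra_simps)
  hence "(entry_sq_sum C k)^2 * s^2 \<le> (entry_sq_sum C k)^2 * (entry_sq_sum B k * q^2)"
    by (simp add: mult_left_mono)
  moreover have "1 \<le> (entry_sq_sum C k)^2 * s^2"
    using s1 by (metis one_le_power power_mult_distrib)
  ultimately show ?thesis unfolding q_def by (simp add: algebra_simps)
qed

lemma psd_small_bilin_imp_det_zero:
  assumes B: "B \<in> carrier_mat k k" and sym: "symmetric_block k B" and psd: "psd_block k B"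
    and small: "\<And>\<epsilon>. \<epsilon> > 0 \<Longrightarrow> \<exists>x. dotp k x x = 1 \<and> bilin B k x x < \<epsilon>"
  shows "det B = 0"
proof (rule ccontr)
  assume "det B \<noteq> 0"
  from det_non_zero_imp_unit[OF B this, of "()"]
  obtain C where C: "C \<in> carrier_mat k k" and CB: "C * B = 1\<^sub>m k"
    unfolding Units_def ring_mat_def by auto
  define K where "K = (entry_sq_sum C k)^2 * entry_sq_sum B k"
  have K0: "K \<ge> 0" unfolding K_def by (simp add: entry_sq_sum_nonneg)
  define \<epsilon> where "\<epsilon> = 1 / (K + 1)"
  have eps: "0 < \<epsilon>" "\<epsilon> \<le> 1" unfolding \<epsilon>_def using K0 by simp_all
  obtain x where unit: "dotp k x x = 1" and q: "bilin B k x x < \<epsilon>" using small[OF eps(1)] by blast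
  have q0: "0 \<le> bilin B k x x" using psd unfolding psd_block_def by blast
  have "1 \<le> K * (bilin B k x x)^2"
    unfolding K_def by (rule invertible_psd_coercive[OF B C CB sym psd unit])
  also have "\<dots> \<le> K * \<epsilon>"
  proof (intro mult_left_mono K0)
    have "(bilin B k x x)^2 \<le> bilin B k x x"
      using q q0 eps by (simp add: power2_eq_square mult_left_le)
    thus "(bilin B k x x)^2 \<le> \<epsilon>" using q by simp
  qed
  also have "\<dots> < 1" unfolding \<epsilon>_def using K0 by simp
  finally show False by simp
qed

lemma bilin_scale_self: "bilin A k (\<lambda>i. c * x i) (\<lambda>i. c * x i) = c^2 * bilin A k x x"
  and dotp_scale_self: "dotp k (\<lambda>i. c * x i) (\<lambda>i. c * x i) = c^2 * dotp k x x"
  unfolding bilin_def mat_app_scale dotp_scale_left dotp_scale_right by (simp_all add: power2_eq_square)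

lemma rayleigh_Inf_le:
  assumes psd: "psd_block k A"
  shows "Inf {bilin A k x x | x. dotp k x x = 1} * dotp k z z \<le> bilin A k z z"
proof (cases "dotp k z z = 0")
  case True
  hence "bilin A k z z = 0" unfolding bilin_def dotp_def using dotp_self_eq_0[OF True] by simp
  thus ?thesis using True by simp
next
  case False
  hence pos: "dotp k z z > 0" using dotp_self_nonneg[of k z] by simp
  define c where "c = 1 / sqrt (dotp k z z)"
  have c2: "c^2 * dotp k z z = 1" unfolding c_def using pos by (simp add: power_divide)
  have bdd: "bdd_below {bilin A k x x | x. dotp k x x = 1}"
    using psd unfolding bdd_below_def psd_block_def by blast
  have "c^2 * bilin A k z z \<in> {bilin A k x x | x. dotp k x x = 1}"
    using c2 by (auto simp flip: bilin_scale_self dotp_scale_self)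
  hence "Inf {bilin A k x x | x. dotp k x x = 1} * dotp k z z \<le> c^2 * bilin A k z z * dotp k z z"
    using pos bdd by (intro mult_right_mono cInf_lower) auto
  also have "\<dots> = bilin A k z z" using c2 by (simp add: algebra_simps)
  finally show ?thesis .
qed

lemma bilin_char_matrix:
  assumes A: "A \<in> carrier_mat k k"
  shows "bilin (char_matrix A \<mu>) k x y = bilin A k x y - \<mu> * dotp k x y"
proof -
  have "mat_app (char_matrix A \<mu>) k y i = mat_app A k y i + (- \<mu>) * y i" if "i < k" for i
  proof -
    have "mat_app (char_matrix A \<mu>) k y i = (\<Sum>j<k. A $$ (i,j) * y j - \<mu> * (if j = i then y j else 0))"
      unfolding mat_app_def char_matrix_def using that A by (intro sum.cong) (auto simp: algebra_simps)
    also have "\<dots> = mat_app A k y i - \<mu> * (\<Sum>j<k. if j = i then y j else 0)"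
      unfolding mat_app_def sum_subtractf sum_distrib_left ..
    finally show ?thesis using that by simp
  qed
  hence "bilin (char_matrix A \<mu>) k x y = dotp k x (\<lambda>i. mat_app A k y i + (- \<mu>) * y i)"
    unfolding bilin_def by (intro dotp_cong) auto
  thus ?thesis unfolding dotp_add_right dotp_scale_right bilin_def by simp
qed

lemma psd_Rayleigh_Inf_eigenvalue:
  assumes A: "A \<in> carrier_mat k k" and k: "k > 0"
    and sym: "symmetric_block k A" and psd: "psd_block k A"
  shows "\<exists>\<mu>\<ge>0. (\<forall>x. \<mu> * dotp k x x \<le> bilin A k x x) \<and> eigenvalue A \<mu>"
proof -
  define S where "S = {bilin A k x x | x. dotp k x x = 1}"
  define \<mu> where "\<mu> = Inf S"
  have "dotp k (\<lambda>i. if i = 0 then 1 else 0) (\<lambda>i. if i = 0 then 1 else 0) = 1"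
    unfolding dotp_def using k by (simp add: if_distrib cong: if_cong)
  hence S_ne: "S \<noteq> {}" unfolding S_def by blast
  have bdd: "bdd_below S" using psd unfolding S_def bdd_below_def psd_block_def by blast
  have low: "\<mu> * dotp k x x \<le> bilin A k x x" for x
    unfolding \<mu>_def S_def by (rule rayleigh_Inf_le[OF psd])
  have mu0: "\<mu> \<ge> 0" unfolding \<mu>_def using S_ne psd
    by (intro cInf_greatest) (auto simp: S_def psd_block_def)
  define B where "B = char_matrix A \<mu>"
  have Bc: "B \<in> carrier_mat k k" unfolding B_def char_matrix_def using A by auto
  have bilin_B: "bilin B k x x = bilin A k x x - \<mu> * dotp k x x" for x
    unfolding B_def by (rule bilin_char_matrix[OF A])
  have symB: "symmetric_block k B"
    using sym A unfolding symmetric_block_def B_def char_matrix_def by auto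
  have psdB: "psd_block k B" unfolding psd_block_def bilin_B using low by simp
  have "det B = 0"
  proof (rule psd_small_bilin_imp_det_zero[OF Bc symB psdB])
    fix \<epsilon> :: real assume "\<epsilon> > 0"
    then obtain x where "dotp k x x = 1" "bilin A k x x < \<mu> + \<epsilon>"
      using cInf_less_iff[OF S_ne bdd, of "\<mu> + \<epsilon>"] unfolding \<mu>_def S_def by auto
    thus "\<exists>x. dotp k x x = 1 \<and> bilin B k x x < \<epsilon>" unfolding bilin_B by auto
  qed
  hence "eigenvalue A \<mu>" unfolding B_def using eigenvalue_det[OF A] by simp
  thus ?thesis using mu0 low by blast
qed

lemma sigma_min_le_Rayleigh:
  assumes A: "A \<in> carrier_mat k k"
    and sym: "symmetric_block k A" and psd: "psd_block k A"
  shows "sigma_min A * dotp k x x \<le> bilin A k x x"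
proof (cases "k = 0")
  case True
  thus ?thesis unfolding bilin_def dotp_def by simp
next
  case False
  then obtain \<mu> where mu0: "\<mu> \<ge> 0" and low: "\<And>x. \<mu> * dotp k x x \<le> bilin A k x x"
    and ev: "eigenvalue A \<mu>" using psd_Rayleigh_Inf_eigenvalue[OF A _ sym psd] by blast
  from ev obtain v where v: "v \<in> carrier_vec k" "v \<noteq> 0\<^sub>v k" and Av: "A *\<^sub>v v = \<mu> \<cdot>\<^sub>v v"
    unfolding eigenvalue_def eigenvector_def using A by auto
  define M where "M = transpose_mat A * A"
  have M: "M \<in> carrier_mat k k" unfolding M_def using A by auto
  \<comment> \<open>A is symmetric, so M = A * A has the eigenvalue \<mu> * \<mu>.\<close>
  have "transpose_mat A = A" using A sym unfolding symmetric_block_def by (intro eq_matI) auto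
  hence "M *\<^sub>v v = \<mu>^2 \<cdot>\<^sub>v v"
    unfolding M_def using A v
    by (simp add: Av mult_mat_vec[OF A v(1)] smult_smult_assoc power2_eq_square)
  hence evM: "eigenvalue M (\<mu>^2)" unfolding eigenvalue_def eigenvector_def using v M by auto
  have "finite {e. eigenvalue M e}"
  proof -
    have "{e. eigenvalue M e} = {e. poly (char_poly M) e = 0}"
      using eigenvalue_root_char_poly[OF M] by auto
    moreover have "char_poly M \<noteq> 0" using degree_monic_char_poly[OF M] by auto
    ultimately show ?thesis using poly_roots_finite by simp
  qed
  hence "Min {e. eigenvalue M e} \<le> \<mu>^2" using evM by (intro Min_le) auto
  hence "sigma_min A \<le> \<mu>" unfolding sigma_min_def M_def[symmetric]
    using mu0 real_sqrt_le_mono by fastforce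
  hence "sigma_min A * dotp k x x \<le> \<mu> * dotp k x x" by (intro mult_right_mono dotp_self_nonneg)
  also have "\<dots> \<le> bilin A k x x" by (rule low)
  finally show ?thesis .
qed

lemma Gram_sigma_min_bound:
  fixes x :: "nat \<Rightarrow> nat \<Rightarrow> real"
  assumes A: "A \<in> carrier_mat k k" and n: "n > 0"
    and Gram: "\<And>i i'. i < k \<Longrightarrow> i' < k \<Longrightarrow> A $$ (i,i') = (\<Sum>a<n. x a i * x a i') / real n"
  shows "real n * sigma_min A * (\<Sum>i<k. (z i)^2) \<le> (\<Sum>a<n. (\<Sum>i<k. x a i * z i)^2)"
proof -
  have bilin_A: "bilin A k w w = (\<Sum>a<n. (\<Sum>i<k. x a i * w i)^2) / real n" for w
  proof -
    have "bilin A k w w = (\<Sum>i<k. \<Sum>i'<k. \<Sum>a<n. w i * x a i * x a i' * w i' / real n)"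
      unfolding bilin_def dotp_def mat_app_def
      by (intro sum.cong refl) (simp add: Gram sum_distrib_left sum_divide_distrib algebra_simps)
    also have "\<dots> = (\<Sum>i<k. \<Sum>a<n. \<Sum>i'<k. w i * x a i * x a i' * w i' / real n)"
      by (intro sum.cong refl sum.swap)
    also have "\<dots> = (\<Sum>a<n. \<Sum>i<k. \<Sum>i'<k. w i * x a i * x a i' * w i' / real n)"
      by (rule sum.swap)
    also have "\<dots> = (\<Sum>a<n. (\<Sum>i<k. x a i * w i)^2) / real n"
      by (simp add: power2_eq_square sum_distrib_left sum_distrib_right sum_divide_distrib algebra_simps)
    finally show ?thesis .
  qed
  have sym: "symmetric_block k A" unfolding symmetric_block_def by (simp add: Gram mult.commute)
  have psd: "psd_block k A" unfolding psd_block_def bilin_A by (simp add: sum_nonneg)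
  have "real n * (sigma_min A * dotp k z z) \<le> real n * bilin A k z z"
    using sigma_min_le_Rayleigh[OF A sym psd] by (intro mult_left_mono) auto
  also have "\<dots> = (\<Sum>a<n. (\<Sum>i<k. x a i * z i)^2)" unfolding bilin_A using n by simp
  finally show ?thesis unfolding dotp_def by (simp add: power2_eq_square mult.assoc)
qed

section \<open>The error bound in coordinates\<close>

definition sandwich ::
    "nat \<Rightarrow> nat \<Rightarrow> (nat \<Rightarrow> nat \<Rightarrow> real) \<Rightarrow> (nat \<Rightarrow> nat \<Rightarrow> real) \<Rightarrow> (nat \<Rightarrow> nat \<Rightarrow> real) \<Rightarrow> nat \<Rightarrow> nat \<Rightarrow> real" where
  "sandwich k l x y B a b = (\<Sum>i<k. \<Sum>j<l. x a i * B i j * y b j)"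

definition cca_residual ::
    "nat \<Rightarrow> nat \<Rightarrow> nat \<Rightarrow> (nat \<Rightarrow> nat \<Rightarrow> real) \<Rightarrow> (nat \<Rightarrow> nat \<Rightarrow> real) \<Rightarrow> (nat \<Rightarrow> nat \<Rightarrow> real) \<Rightarrow> nat \<Rightarrow> nat \<Rightarrow> real" where
  "cca_residual n k l x y B a b = sandwich k l x y B a b / real n - (if a = b then 1 else 0)"

definition cca_loss ::
    "nat \<Rightarrow> nat \<Rightarrow> nat \<Rightarrow> real \<Rightarrow> (nat \<Rightarrow> nat \<Rightarrow> real) \<Rightarrow> (nat \<Rightarrow> nat \<Rightarrow> real) \<Rightarrow> (nat \<Rightarrow> nat \<Rightarrow> real) \<Rightarrow> real" where
  "cca_loss n k l lam x y B = 1/2 * (\<Sum>a<n. \<Sum>b<n. (cca_residual n k l x y B a b)^2)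
      + lam * (\<Sum>i<k. \<Sum>j<l. \<bar>B i j\<bar>)"

definition cca_gradient ::
    "nat \<Rightarrow> nat \<Rightarrow> nat \<Rightarrow> (nat \<Rightarrow> nat \<Rightarrow> real) \<Rightarrow> (nat \<Rightarrow> nat \<Rightarrow> real) \<Rightarrow> (nat \<Rightarrow> nat \<Rightarrow> real) \<Rightarrow> nat \<Rightarrow> nat \<Rightarrow> real" where
  "cca_gradient n k l x y B i j = (\<Sum>a<n. \<Sum>b<n. cca_residual n k l x y B a b * x a i * y b j) / real n"

lemma sandwich_add:
  "sandwich k l x y (\<lambda>i j. B i j + D i j) a b = sandwich k l x y B a b + sandwich k l x y D a b"
  unfolding sandwich_def by (simp add: algebra_simps sum.distrib)

lemma sum_mult_sandwich:
  "(\<Sum>a<n. \<Sum>b<n. R a b * sandwich k l x y D a b)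
     = (\<Sum>i<k. \<Sum>j<l. D i j * (\<Sum>a<n. \<Sum>b<n. R a b * x a i * y b j))"
proof -
  have "(\<Sum>a<n. \<Sum>b<n. R a b * sandwich k l x y D a b)
      = (\<Sum>a<n. \<Sum>b<n. \<Sum>i<k. \<Sum>j<l. D i j * (R a b * x a i * y b j))"
    unfolding sandwich_def by (simp add: sum_distrib_left algebra_simps)
  also have "\<dots> = (\<Sum>a<n. \<Sum>i<k. \<Sum>b<n. \<Sum>j<l. D i j * (R a b * x a i * y b j))"
    by (intro sum.cong refl sum.swap)
  also have "\<dots> = (\<Sum>i<k. \<Sum>a<n. \<Sum>j<l. \<Sum>b<n. D i j * (R a b * x a i * y b j))"
    by (subst sum.swap) (intro sum.cong refl sum.swap)
  also have "\<dots> = (\<Sum>i<k. \<Sum>j<l. \<Sum>a<n. \<Sum>b<n. D i j * (R a b * x a i * y b j))"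
    by (intro sum.cong refl sum.swap)
  also have "\<dots> = (\<Sum>i<k. \<Sum>j<l. D i j * (\<Sum>a<n. \<Sum>b<n. R a b * x a i * y b j))"
    by (simp add: sum_distrib_left)
  finally show ?thesis .
qed

lemma neg_sum_mult_le:
  fixes D G :: "nat \<Rightarrow> nat \<Rightarrow> real"
  assumes "\<And>i j. i < k \<Longrightarrow> j < l \<Longrightarrow> \<bar>G i j\<bar> \<le> g"
  shows "- (\<Sum>i<k. \<Sum>j<l. D i j * G i j) \<le> g * (\<Sum>i<k. \<Sum>j<l. \<bar>D i j\<bar>)"
proof -
  have "- (\<Sum>i<k. \<Sum>j<l. D i j * G i j) \<le> (\<Sum>i<k. \<Sum>j<l. \<bar>D i j\<bar> * g)"
    unfolding sum_negf[symmetric]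
  proof (intro sum_mono)
    fix i j assume "i \<in> {..<k}" "j \<in> {..<l}"
    hence "\<bar>D i j\<bar> * \<bar>G i j\<bar> \<le> \<bar>D i j\<bar> * g" using assms by (intro mult_left_mono) auto
    thus "- (D i j * G i j) \<le> \<bar>D i j\<bar> * g" by (simp add: abs_mult[symmetric] abs_le_iff)
  qed
  thus ?thesis by (simp add: sum_distrib_left mult.commute)
qed

lemma cca_loss_basic_inequality:
  fixes x y Bt B0 :: "nat \<Rightarrow> nat \<Rightarrow> real"
  assumes lam: "lam \<ge> 0"
    and opt: "cca_loss n k l lam x y Bt \<le> cca_loss n k l lam x y B0"
    and grad: "\<And>i j. i < k \<Longrightarrow> j < l \<Longrightarrow> \<bar>cca_gradient n k l x y B0 i j\<bar> \<le> g"
  defines "D \<equiv> \<lambda>i j. Bt i j - B0 i j"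
  shows "(\<Sum>a<n. \<Sum>b<n. (sandwich k l x y D a b / real n)^2) / 2
           \<le> (g + lam) * (\<Sum>i<k. \<Sum>j<l. \<bar>D i j\<bar>)"
proof -
  define R0 where "R0 = cca_residual n k l x y B0"
  define TD where "TD = (\<lambda>a b. sandwich k l x y D a b / real n)"
  define L1 where "L1 = (\<lambda>B. \<Sum>i<k. \<Sum>j<l. \<bar>B i j\<bar> :: real)"
  have "cca_residual n k l x y Bt a b = R0 a b + TD a b" for a b
  proof -
    have "Bt = (\<lambda>i j. B0 i j + D i j)" unfolding D_def by simp
    thus ?thesis unfolding R0_def TD_def cca_residual_def by (simp add: sandwich_add add_divide_distrib)
  qed
  hence "cca_loss n k l lam x y Bt
      = 1/2 * (\<Sum>a<n. \<Sum>b<n. (R0 a b)^2) + (\<Sum>a<n. \<Sum>b<n. R0 a b * TD a b)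
        + 1/2 * (\<Sum>a<n. \<Sum>b<n. (TD a b)^2) + lam * L1 Bt"
    unfolding cca_loss_def L1_def
    by (simp add: power2_eq_square algebra_simps sum.distrib sum_distrib_left)
  moreover have "cca_loss n k l lam x y B0 = 1/2 * (\<Sum>a<n. \<Sum>b<n. (R0 a b)^2) + lam * L1 B0"
    unfolding cca_loss_def R0_def L1_def ..
  ultimately have basic: "(\<Sum>a<n. \<Sum>b<n. (TD a b)^2) / 2
      \<le> - (\<Sum>a<n. \<Sum>b<n. R0 a b * TD a b) + lam * (L1 B0 - L1 Bt)"
    using opt by (simp add: algebra_simps)
  have "(\<Sum>a<n. \<Sum>b<n. R0 a b * TD a b) = (\<Sum>i<k. \<Sum>j<l. D i j * cca_gradient n k l x y B0 i j)"
    unfolding TD_def cca_gradient_def R0_def times_divide_eq_right[symmetric]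
    by (simp add: sum_divide_distrib[symmetric] sum_mult_sandwich)
  hence cross: "- (\<Sum>a<n. \<Sum>b<n. R0 a b * TD a b) \<le> g * L1 D"
    unfolding L1_def using neg_sum_mult_le[OF grad] by simp
  have "L1 B0 - L1 Bt \<le> L1 D"
  proof -
    have "L1 B0 \<le> (\<Sum>i<k. \<Sum>j<l. \<bar>Bt i j\<bar> + \<bar>D i j\<bar>)"
      unfolding L1_def D_def by (intro sum_mono) auto
    thus ?thesis unfolding L1_def by (simp add: sum.distrib)
  qed
  hence "lam * (L1 B0 - L1 Bt) \<le> lam * L1 D" using lam by (rule mult_left_mono)
  with basic cross show ?thesis unfolding TD_def L1_def by (simp add: algebra_simps)
qed

lemma sandwich_sq_lower_bound:
  fixes x y D :: "nat \<Rightarrow> nat \<Rightarrow> real"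
  assumes sx: "sx \<ge> 0"
    and hx: "\<And>z. real n * sx * (\<Sum>i<k. (z i)^2) \<le> (\<Sum>a<n. (\<Sum>i<k. x a i * z i)^2)"
    and hy: "\<And>z. real n * sy * (\<Sum>j<l. (z j)^2) \<le> (\<Sum>b<n. (\<Sum>j<l. y b j * z j)^2)"
  shows "real n * sx * (real n * sy * (\<Sum>i<k. \<Sum>j<l. (D i j)^2))
           \<le> (\<Sum>a<n. \<Sum>b<n. (sandwich k l x y D a b)^2)"
proof -
  \<comment> \<open>Apply the bound for y to each row of D, then the bound for x to each column of W = D y'.\<close>
  define W where "W = (\<lambda>i b. \<Sum>j<l. y b j * D i j)"
  have "real n * sx * (real n * sy * (\<Sum>i<k. \<Sum>j<l. (D i j)^2))
      = real n * sx * (\<Sum>i<k. real n * sy * (\<Sum>j<l. (D i j)^2))"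
    by (simp add: sum_distrib_left)
  also have "\<dots> \<le> real n * sx * (\<Sum>i<k. \<Sum>b<n. (W i b)^2)"
    using sx unfolding W_def by (intro mult_left_mono sum_mono hy) auto
  also have "\<dots> = (\<Sum>b<n. real n * sx * (\<Sum>i<k. (W i b)^2))"
    by (simp add: sum_distrib_left) (rule sum.swap)
  also have "\<dots> \<le> (\<Sum>b<n. \<Sum>a<n. (\<Sum>i<k. x a i * W i b)^2)" by (intro sum_mono hx)
  also have "\<dots> = (\<Sum>a<n. \<Sum>b<n. (sandwich k l x y D a b)^2)"
  proof -
    have "sandwich k l x y D a b = (\<Sum>i<k. x a i * W i b)" for a b
      unfolding sandwich_def W_def by (simp add: sum_distrib_left algebra_simps)
    hence "(\<Sum>b<n. \<Sum>a<n. (\<Sum>i<k. x a i * W i b)^2) = (\<Sum>b<n. \<Sum>a<n. (sandwich k l x y D a b)^2)"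
      by simp
    thus ?thesis by (rule trans[OF _ sum.swap])
  qed
  finally show ?thesis .
qed

lemma l1_le_sqrt_card_l2:
  fixes D :: "nat \<Rightarrow> nat \<Rightarrow> real"
  shows "(\<Sum>i<k. \<Sum>j<l. \<bar>D i j\<bar>) \<le> sqrt (real (k * l)) * sqrt (\<Sum>i<k. \<Sum>j<l. (D i j)^2)"
proof -
  let ?S = "{..<k} \<times> {..<l}"
  have "(\<Sum>i<k. \<Sum>j<l. \<bar>D i j\<bar>)^2 = (\<Sum>(i,j)\<in>?S. \<bar>D i j\<bar> * 1)^2"
    by (simp add: sum.cartesian_product)
  also have "\<dots> \<le> (\<Sum>(i,j)\<in>?S. \<bar>D i j\<bar>^2) * (\<Sum>(i,j)\<in>?S. 1^2)"
    using sum_Cauchy_Schwarz[of "\<lambda>(i,j). \<bar>D i j\<bar>" "\<lambda>_. 1" ?S] by (simp add: case_prod_unfold)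
  also have "\<dots> = real (k * l) * (\<Sum>i<k. \<Sum>j<l. (D i j)^2)"
    by (simp add: sum.cartesian_product)
  finally have "sqrt ((\<Sum>i<k. \<Sum>j<l. \<bar>D i j\<bar>)^2) \<le> sqrt (real (k * l) * (\<Sum>i<k. \<Sum>j<l. (D i j)^2))"
    by (rule real_sqrt_le_mono)
  moreover have "(\<Sum>i<k. \<Sum>j<l. \<bar>D i j\<bar>) \<ge> 0" by (intro sum_nonneg) auto
  ultimately show ?thesis by (simp add: real_sqrt_mult)
qed

lemma cca_loss_minimizer_error_bound:
  fixes x y Bt B0 :: "nat \<Rightarrow> nat \<Rightarrow> real"
  assumes n: "n > 0" and lam: "lam \<ge> 0" and g: "g \<ge> 0"
    and opt: "cca_loss n k l lam x y Bt \<le> cca_loss n k l lam x y B0"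
    and grad: "\<And>i j. i < k \<Longrightarrow> j < l \<Longrightarrow> \<bar>cca_gradient n k l x y B0 i j\<bar> \<le> g"
    and sx: "sx > 0" and sy: "sy > 0"
    and hx: "\<And>z. real n * sx * (\<Sum>i<k. (z i)^2) \<le> (\<Sum>a<n. (\<Sum>i<k. x a i * z i)^2)"
    and hy: "\<And>z. real n * sy * (\<Sum>j<l. (z j)^2) \<le> (\<Sum>b<n. (\<Sum>j<l. y b j * z j)^2)"
  shows "sqrt (\<Sum>i<k. \<Sum>j<l. (Bt i j - B0 i j)^2) \<le> 2 * (g + lam) / (sx * sy) * sqrt (real (k * l))"
proof -
  define D where "D = (\<lambda>i j. Bt i j - B0 i j)"
  define F where "F = (\<Sum>i<k. \<Sum>j<l. (D i j)^2)"
  have F0: "F \<ge> 0" unfolding F_def by (intro sum_nonneg) auto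
  have "real n ^ 2 * (sx * sy * F) = real n * sx * (real n * sy * F)"
    by (simp add: power2_eq_square)
  also have "\<dots> \<le> (\<Sum>a<n. \<Sum>b<n. (sandwich k l x y D a b)^2)"
    unfolding F_def using sx by (intro sandwich_sq_lower_bound hx hy) simp
  also have "\<dots> = real n ^ 2 * (\<Sum>a<n. \<Sum>b<n. (sandwich k l x y D a b / real n)^2)"
    using n by (simp add: sum_distrib_left power_divide)
  finally have "sx * sy * F / 2 \<le> (\<Sum>a<n. \<Sum>b<n. (sandwich k l x y D a b / real n)^2) / 2"
    using n by simp
  also have "\<dots> \<le> (g + lam) * (\<Sum>i<k. \<Sum>j<l. \<bar>D i j\<bar>)"
    unfolding D_def by (rule cca_loss_basic_inequality[OF lam opt grad])
  also have "\<dots> \<le> (g + lam) * (sqrt (real (k * l)) * sqrt F)"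
    unfolding F_def using g lam by (intro mult_left_mono l1_le_sqrt_card_l2) auto
  finally have "(sx * sy * sqrt F / 2) * sqrt F \<le> ((g + lam) * sqrt (real (k * l))) * sqrt F"
    using F0 by (simp add: mult.assoc real_sqrt_mult_self)
  hence "sx * sy * sqrt F / 2 \<le> (g + lam) * sqrt (real (k * l))"
    using F0 by (cases "F = 0") (auto simp: g lam intro: mult_right_le_imp_le)
  thus ?thesis unfolding F_def D_def using sx sy by (simp add: field_simps)
qed

section \<open>From matrices to coordinates\<close>

abbreviation entries :: "real mat \<Rightarrow> nat \<Rightarrow> nat \<Rightarrow> real" where
  "entries A \<equiv> \<lambda>i j. A $$ (i,j)"

lemma mat_mult3_index:
  assumes "A \<in> carrier_mat m k" "B \<in> carrier_mat k l" "C \<in> carrier_mat l r" "a < m" "b < r"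
  shows "(A * B * C) $$ (a,b) = (\<Sum>i<k. \<Sum>j<l. A $$ (a,i) * B $$ (i,j) * C $$ (j,b))"
  using assms by (simp add: scalar_prod_def lessThan_atLeast0 sum_distrib_left mult.assoc)

lemma sandwich_eq_index:
  assumes "XS \<in> carrier_mat n k" "B \<in> carrier_mat k l" "YS \<in> carrier_mat m l" "a < n" "b < m"
  shows "sandwich k l (entries XS) (entries YS) (entries B) a b = (XS * B * transpose_mat YS) $$ (a,b)"
  using assms unfolding sandwich_def by (subst mat_mult3_index[where k=k and l=l]) auto

lemma transpose_mult_mult_index:
  assumes "A \<in> carrier_mat n p" "R \<in> carrier_mat n n" "C \<in> carrier_mat n q" "u < p" "v < q"
  shows "(transpose_mat A * R * C) $$ (u,v) = (\<Sum>a<n. \<Sum>b<n. A $$ (a,u) * R $$ (a,b) * C $$ (b,v))"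
  using assms by (subst mat_mult3_index[where k=n and l=n]) auto

lemma sample_cov_index:
  assumes "X \<in> carrier_mat n p" "Y \<in> carrier_mat n q" "u < p" "v < q"
  shows "sample_cov X Y $$ (u,v) = (\<Sum>a<n. X $$ (a,u) * Y $$ (a,v)) / real n"
  using assms unfolding sample_cov_def by (simp add: scalar_prod_def lessThan_atLeast0)

lemma submatrix_subset_carrier:
  assumes "A \<in> carrier_mat m r" "I \<subseteq> {..<m}" "J \<subseteq> {..<r}"
  shows "submatrix A I J \<in> carrier_mat (card I) (card J)"
proof -
  have "{i. i < m \<and> i \<in> I} = I" "{j. j < r \<and> j \<in> J} = J" using assms by auto
  thus ?thesis using assms unfolding carrier_mat_def by (simp add: dim_submatrix)
qed

lemma submatrix_subset_index:
  assumes "A \<in> carrier_mat m r" "I \<subseteq> {..<m}" "J \<subseteq> {..<r}" "i < card I" "j < card J"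
  shows "submatrix A I J $$ (i,j) = A $$ (pick I i, pick J j)"
proof -
  have "{i. i < m \<and> i \<in> I} = I" "{j. j < r \<and> j \<in> J} = J" using assms by auto
  thus ?thesis using assms by (intro submatrix_index) auto
qed

lemma pick_lessThan: "a < n \<Longrightarrow> pick {..<n} a = a"
  using pick_reduce_set[of a n UNIV] by (simp add: pick_UNIV lessThan_def)

lemma cols_carrier: "X \<in> carrier_mat n p \<Longrightarrow> S \<subseteq> {..<p} \<Longrightarrow> cols X S \<in> carrier_mat n (card S)"
  unfolding cols_def using submatrix_subset_carrier[of X n p "{..<n}" S] by simp

lemma cols_index:
  "X \<in> carrier_mat n p \<Longrightarrow> S \<subseteq> {..<p} \<Longrightarrow> a < n \<Longrightarrow> i < card S \<Longrightarrow> cols X S $$ (a,i) = X $$ (a, pick S i)"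
  unfolding cols_def using submatrix_subset_index[of X n p "{..<n}" S a i] by (simp add: pick_lessThan)

lemma pick_subset_lessThan: "S \<subseteq> {..<p} \<Longrightarrow> i < card S \<Longrightarrow> pick S i < p"
  using pick_in_set_le by blast

lemma sum_lessThan_reindex_pick:
  fixes g :: "nat \<Rightarrow> real"
  assumes S: "S \<subseteq> {..<p}" and g: "\<And>u. u < p \<Longrightarrow> u \<notin> S \<Longrightarrow> g u = 0"
  shows "(\<Sum>u<p. g u) = (\<Sum>i<card S. g (pick S i))"
proof -
  have fin: "finite S" using S finite_subset by blast
  have "inj_on (pick S) {..<card S}"
    by (intro inj_onI) (metis lessThan_iff linorder_neqE_nat pick_mono_le less_irrefl)
  moreover have "pick S ` {..<card S} = S"
    using card_subset_eq[OF fin, of "pick S ` {..<card S}"] card_image[OF calculation] pick_in_set_le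
    by fastforce
  ultimately have "bij_betw (pick S) {..<card S} S" unfolding bij_betw_def by simp
  hence "(\<Sum>i<card S. g (pick S i)) = (\<Sum>u\<in>S. g u)" by (rule sum.reindex_bij_betw)
  also have "\<dots> = (\<Sum>u<p. g u)" using S g by (intro sum.mono_neutral_left) auto
  finally show ?thesis by simp
qed

lemma sample_cov_gradient:
  assumes X: "X \<in> carrier_mat n p" and Y: "Y \<in> carrier_mat n q" and B: "B \<in> carrier_mat p q"
  shows "(1 / real n) \<cdot>\<^sub>m (transpose_mat X * ((1 / real n) \<cdot>\<^sub>m (X * B * transpose_mat Y) - 1\<^sub>m n) * Y)
       = sample_cov X X * B * sample_cov Y Y - sample_cov X Y"
proof -
  have XT: "transpose_mat X \<in> carrier_mat p n" and YT: "transpose_mat Y \<in> carrier_mat q n"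
    using X Y by auto
  define M where "M = X * B * transpose_mat Y"
  have M: "M \<in> carrier_mat n n" unfolding M_def using X B YT by auto
  have "transpose_mat X * ((1 / real n) \<cdot>\<^sub>m M - 1\<^sub>m n)
      = (1 / real n) \<cdot>\<^sub>m (transpose_mat X * M) - transpose_mat X"
    by (simp add: mult_minus_distrib_mat[OF XT smult_carrier_mat[OF M] one_carrier_mat]
        mult_smult_distrib[OF XT M] right_mult_one_mat[OF XT])
  hence "transpose_mat X * ((1 / real n) \<cdot>\<^sub>m M - 1\<^sub>m n) * Y
      = (1 / real n) \<cdot>\<^sub>m (transpose_mat X * M * Y) - transpose_mat X * Y"
    using M XT Y by (simp add: minus_mult_distrib_mat[OF smult_carrier_mat[OF mult_carrier_mat[OF XT M]] XT Y]
        mult_smult_assoc_mat[OF mult_carrier_mat[OF XT M] Y])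
  also have "transpose_mat X * M * Y = (transpose_mat X * X) * B * (transpose_mat Y * Y)"
  proof -
    have XB: "X * B \<in> carrier_mat n q" using X B by auto
    have "transpose_mat X * M * Y = transpose_mat X * (X * B * (transpose_mat Y * Y))"
      unfolding M_def using XT XB YT Y by (simp add: assoc_mult_mat[OF XT _ Y] assoc_mult_mat[OF XB YT Y])
    also have "\<dots> = (transpose_mat X * X) * B * (transpose_mat Y * Y)"
      by (simp add: assoc_mult_mat[OF XT XB mult_carrier_mat[OF YT Y]] assoc_mult_mat[OF XT X B])
    finally show ?thesis .
  qed
  finally have "transpose_mat X * ((1 / real n) \<cdot>\<^sub>m M - 1\<^sub>m n) * Y
      = (1 / real n) \<cdot>\<^sub>m (transpose_mat X * X * B * (transpose_mat Y * Y)) - transpose_mat X * Y" .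
  moreover have "sample_cov X X * B * sample_cov Y Y
      = (1 / real n) \<cdot>\<^sub>m ((1 / real n) \<cdot>\<^sub>m (transpose_mat X * X * B * (transpose_mat Y * Y)))"
    unfolding sample_cov_def using X Y B XT YT
    by (simp add: mult_smult_assoc_mat[of _ p p _ q] mult_smult_assoc_mat[of _ p q _ q]
        mult_smult_distrib[of _ p q _ q])
  ultimately show ?thesis
    unfolding M_def sample_cov_def using X Y B by (intro eq_matI) (auto simp: right_diff_distrib)
qed

lemma frob_norm_diff:
  assumes "A \<in> carrier_mat k l" "B \<in> carrier_mat k l"
  shows "frob_norm (A - B) = sqrt (\<Sum>i<k. \<Sum>j<l. (A $$ (i,j) - B $$ (i,j))^2)"
  using assms unfolding frob_norm_def by (intro arg_cong[where f=sqrt] sum.cong) auto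

lemma finite_abs_entries: "finite ({0} \<union> {\<bar>A $$ (i,j)\<bar> | i j. i < dim_row A \<and> j < dim_col A})"
proof -
  have "{\<bar>A $$ (i,j)\<bar> | i j. i < dim_row A \<and> j < dim_col A}
      = (\<lambda>(i,j). \<bar>A $$ (i,j)\<bar>) ` ({..<dim_row A} \<times> {..<dim_col A})" by auto
  thus ?thesis by simp
qed

lemma max_abs_norm_nonneg: "0 \<le> max_abs_norm A"
  unfolding max_abs_norm_def using finite_abs_entries by (intro Max_ge) auto

lemma abs_index_le_max_abs_norm: "i < dim_row A \<Longrightarrow> j < dim_col A \<Longrightarrow> \<bar>A $$ (i,j)\<bar> \<le> max_abs_norm A"
  unfolding max_abs_norm_def using finite_abs_entries by (intro Max_ge) auto

lemma cca_objective_eq_cca_loss: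
  assumes XS: "XS \<in> carrier_mat n k" and YS: "YS \<in> carrier_mat n l" and B: "B \<in> carrier_mat k l"
  shows "cca_objective XS YS lam B = cca_loss n k l lam (entries XS) (entries YS) (entries B)"
proof -
  define M where "M = (1 / real n) \<cdot>\<^sub>m (XS * B * transpose_mat YS) - 1\<^sub>m n"
  have "M $$ (a,b) = cca_residual n k l (entries XS) (entries YS) (entries B) a b"
    if "a < n" "b < n" for a b
    unfolding M_def cca_residual_def using that XS YS B by (simp add: sandwich_eq_index[OF XS B YS])
  moreover have "M \<in> carrier_mat n n" unfolding M_def using XS YS B by auto
  ultimately have "(frob_norm M)^2 = (\<Sum>a<n. \<Sum>b<n. (cca_residual n k l (entries XS) (entries YS) (entries B) a b)^2)"
    unfolding frob_norm_def by (simp add: sum_nonneg)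
  moreover have "l1_entry_norm B = (\<Sum>i<k. \<Sum>j<l. \<bar>B $$ (i,j)\<bar>)"
    unfolding l1_entry_norm_def using B by simp
  ultimately show ?thesis unfolding cca_objective_def cca_loss_def using XS by (simp add: M_def)
qed

lemma sample_cov_cols_Gram:
  assumes X: "X \<in> carrier_mat n p" and S: "S \<subseteq> {..<p}" and "i < card S" "i' < card S"
  shows "submatrix (sample_cov X X) S S $$ (i,i') = (\<Sum>a<n. cols X S $$ (a,i) * cols X S $$ (a,i')) / real n"
proof -
  have "sample_cov X X \<in> carrier_mat p p" unfolding sample_cov_def using X by auto
  thus ?thesis using assms
    by (simp add: submatrix_subset_index sample_cov_index pick_subset_lessThan cols_index)
qed

lemma sample_cov_sigma_min_bound:
  assumes X: "X \<in> carrier_mat n p" and S: "S \<subseteq> {..<p}" and n: "n > 0"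
  shows "real n * sigma_min (submatrix (sample_cov X X) S S) * (\<Sum>i<card S. (z i)^2)
           \<le> (\<Sum>a<n. (\<Sum>i<card S. cols X S $$ (a,i) * z i)^2)"
proof (rule Gram_sigma_min_bound[OF _ n sample_cov_cols_Gram[OF X S]])
  show "submatrix (sample_cov X X) S S \<in> carrier_mat (card S) (card S)"
    unfolding sample_cov_def using X S by (intro submatrix_subset_carrier) auto
qed

context
  fixes X Y Bstar :: "real mat" and n p q :: nat and Su Sv :: "nat set"
  assumes X: "X \<in> carrier_mat n p" and Y: "Y \<in> carrier_mat n q" and Bstar: "Bstar \<in> carrier_mat p q"
    and Su: "Su \<subseteq> {..<p}" and Sv: "Sv \<subseteq> {..<q}"
    and supp: "\<forall>i<p. \<forall>j<q. Bstar $$ (i,j) \<noteq> 0 \<longrightarrow> i \<in> Su \<and> j \<in> Sv"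
begin

lemma sandwich_support:
  assumes "a < n" "b < n"
  shows "sandwich (card Su) (card Sv) (entries (cols X Su)) (entries (cols Y Sv)) (entries (submatrix Bstar Su Sv)) a b
       = (X * Bstar * transpose_mat Y) $$ (a,b)"
proof -
  have "(X * Bstar * transpose_mat Y) $$ (a,b) = (\<Sum>u<p. \<Sum>v<q. X $$ (a,u) * Bstar $$ (u,v) * Y $$ (b,v))"
    using X Y Bstar assms by (subst mat_mult3_index[where k=p and l=q]) auto
  also have "\<dots> = (\<Sum>i<card Su. \<Sum>v<q. X $$ (a, pick Su i) * Bstar $$ (pick Su i, v) * Y $$ (b,v))"
    using supp by (intro sum_lessThan_reindex_pick[OF Su]) (auto intro: sum.neutral)
  also have "\<dots> = (\<Sum>i<card Su. \<Sum>j<card Sv.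
      X $$ (a, pick Su i) * Bstar $$ (pick Su i, pick Sv j) * Y $$ (b, pick Sv j))"
    using supp pick_subset_lessThan[OF Su]
    by (intro sum.cong refl sum_lessThan_reindex_pick[OF Sv]) auto
  also have "\<dots> = sandwich (card Su) (card Sv) (entries (cols X Su)) (entries (cols Y Sv))
      (entries (submatrix Bstar Su Sv)) a b"
    unfolding sandwich_def using assms X Y Bstar Su Sv
    by (intro sum.cong refl) (simp add: cols_index submatrix_subset_index)
  finally show ?thesis by simp
qed

lemma cca_gradient_at_support:
  assumes i: "i < card Su" and j: "j < card Sv"
  shows "cca_gradient n (card Su) (card Sv) (entries (cols X Su)) (entries (cols Y Sv)) (entries (submatrix Bstar Su Sv)) i j
       = (sample_cov X X * Bstar * sample_cov Y Y - sample_cov X Y) $$ (pick Su i, pick Sv j)"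
proof -
  define R where "R = (1 / real n) \<cdot>\<^sub>m (X * Bstar * transpose_mat Y) - 1\<^sub>m n"
  have R: "R \<in> carrier_mat n n" unfolding R_def using X Y Bstar by auto
  have u: "pick Su i < p" and v: "pick Sv j < q" using pick_subset_lessThan Su Sv i j by auto
  have "cca_gradient n (card Su) (card Sv) (entries (cols X Su)) (entries (cols Y Sv)) (entries (submatrix Bstar Su Sv)) i j
      = (\<Sum>a<n. \<Sum>b<n. X $$ (a, pick Su i) * R $$ (a,b) * Y $$ (b, pick Sv j)) / real n"
    unfolding cca_gradient_def cca_residual_def R_def using X Y Bstar Su Sv i j
    by (intro arg_cong2[where f="(/)"] sum.cong refl) (simp add: sandwich_support cols_index)
  also have "\<dots> = (transpose_mat X * R * Y) $$ (pick Su i, pick Sv j) / real n"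
    by (simp only: transpose_mult_mult_index[OF X R Y u v])
  also have "\<dots> = ((1 / real n) \<cdot>\<^sub>m (transpose_mat X * R * Y)) $$ (pick Su i, pick Sv j)"
    using X Y R u v by simp
  also have "\<dots> = (sample_cov X X * Bstar * sample_cov Y Y - sample_cov X Y) $$ (pick Su i, pick Sv j)"
    unfolding R_def sample_cov_gradient[OF X Y Bstar] ..
  finally show ?thesis .
qed

lemma abs_cca_gradient_at_support_le:
  assumes i: "i < card Su" and j: "j < card Sv"
  shows "\<bar>cca_gradient n (card Su) (card Sv) (entries (cols X Su)) (entries (cols Y Sv))
            (entries (submatrix Bstar Su Sv)) i j\<bar>
         \<le> max_abs_norm (sample_cov X Y - sample_cov X X * Bstar * sample_cov Y Y)"
proof -
  define P where "P = sample_cov X X * Bstar * sample_cov Y Y"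
  define C where "C = sample_cov X Y"
  have "P \<in> carrier_mat p q" "C \<in> carrier_mat p q" "pick Su i < p" "pick Sv j < q"
    unfolding P_def C_def sample_cov_def using X Y Bstar i j pick_subset_lessThan Su Sv by auto
  thus ?thesis
    using abs_index_le_max_abs_norm[of "pick Su i" "C - P" "pick Sv j"]
    unfolding cca_gradient_at_support[OF i j] P_def[symmetric] C_def[symmetric] by simp
qed

end

theorem mainTheorem7:
  fixes X Y Bstar Btilde :: "real mat" and n p q :: nat and Su Sv :: "nat set" and lam :: real
  assumes X: "X \<in> carrier_mat n p" and Y: "Y \<in> carrier_mat n q"
    and Bstar: "Bstar \<in> carrier_mat p q"
    and Su: "Su \<subseteq> {..<p}" and Sv: "Sv \<subseteq> {..<q}"
    and supp: "\<forall>i<p. \<forall>j<q. Bstar $$ (i,j) \<noteq> 0 \<longrightarrow> i \<in> Su \<and> j \<in> Sv"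
    and n_gt: "n > card Su * card Sv"
    and lam: "lam > 0"
    and sX: "sigma_min (submatrix (sample_cov X X) Su Su) > 0"
    and sY: "sigma_min (submatrix (sample_cov Y Y) Sv Sv) > 0"
    and Bt: "Btilde \<in> carrier_mat (card Su) (card Sv)"
    and minim: "\<forall>B \<in> carrier_mat (card Su) (card Sv).
        cca_objective (cols X Su) (cols Y Sv) lam Btilde \<le> cca_objective (cols X Su) (cols Y Sv) lam B"
  shows "frob_norm (Btilde - submatrix Bstar Su Sv)
    \<le> 2 * (max_abs_norm (sample_cov X Y - sample_cov X X * Bstar * sample_cov Y Y) + lam)
        / (sigma_min (submatrix (sample_cov X X) Su Su) * sigma_min (submatrix (sample_cov Y Y) Sv Sv))
        * sqrt (real (card Su * card Sv))"
proof -
  define E where "E = sample_cov X Y - sample_cov X X * Bstar * sample_cov Y Y"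
  have n: "n > 0" using n_gt by simp
  note XS = cols_carrier[OF X Su] and YS = cols_carrier[OF Y Sv]
    and B0 = submatrix_subset_carrier[OF Bstar Su Sv]
  have opt: "cca_loss n (card Su) (card Sv) lam (entries (cols X Su)) (entries (cols Y Sv)) (entries Btilde)
      \<le> cca_loss n (card Su) (card Sv) lam (entries (cols X Su)) (entries (cols Y Sv)) (entries (submatrix Bstar Su Sv))"
    using minim B0 Bt by (simp add: cca_objective_eq_cca_loss[OF XS YS])
  have grad: "\<bar>cca_gradient n (card Su) (card Sv) (entries (cols X Su)) (entries (cols Y Sv))
      (entries (submatrix Bstar Su Sv)) i j\<bar> \<le> max_abs_norm E" if "i < card Su" "j < card Sv" for i j
    unfolding E_def using that by (rule abs_cca_gradient_at_support_le[OF X Y Bstar Su Sv supp])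
  have "sqrt (\<Sum>i<card Su. \<Sum>j<card Sv. (Btilde $$ (i,j) - submatrix Bstar Su Sv $$ (i,j))^2)
      \<le> 2 * (max_abs_norm E + lam)
           / (sigma_min (submatrix (sample_cov X X) Su Su) * sigma_min (submatrix (sample_cov Y Y) Sv Sv))
         * sqrt (real (card Su * card Sv))"
    using lam by (intro cca_loss_minimizer_error_bound[OF n _ max_abs_norm_nonneg opt grad sX sY
        sample_cov_sigma_min_bound[OF X Su n] sample_cov_sigma_min_bound[OF Y Sv n]]) simp
  thus ?thesis unfolding E_def frob_norm_diff[OF Bt B0] .
qed

end
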